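(* Let $D$ be a pipe dream and $i\ge1$ a row index with $\mathcal J_i(D)\neq\emptyset$, and let $j_{\min}=\min\mathcal J_i(D)$. Then $\delta(D)=\delta\big(D\setminus\{(i,j_{\min})\}\big)\star s_i$.
   Context: Permutations: $S_\infty=\bigcup_n S_n$ is generated by the simple transpositions $s_a=(a\ a{+}1)$, $a\ge 1$; $l(w)$ is the Coxeter length of $w$. A pipe dream is a finite subset $D\subset\mathbb{Z}_{>0}\times\mathbb{Z}_{>0}$; its elements $(r,c)$ are called crosses (in row $r$, column $c$). The reading word of $D$ is obtained by listing the crosses row by row from top to bottom, within each row from right to left (decreasing $c$), and recording for each cross $(r,c)$ its antidiagonal index $r+c-1$; this gives a word $(a_1,\dots,a_k)$. For $u\in S_\infty$ put $u\star s_a=us_a$ if $l(us_a)=l(u)+1$ and $u\star s_a=u$ otherwise. The Demazure product of $D$ is $\delta(D)=(\cdots((e\star s_{a_1})\star s_{a_2})\cdots)\star s_{a_k}$. For a pipe dream $D$ and row index $i$: $\mathrm{start}_i(D)=\min\{c\ge1:(i,c)\notin D\}$ and $\mathcal J_i(D)=\{c<\mathrm{start}_i(D):(i+1,c)\notin D\}$. *)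

theory Defs
  imports Main "HOL-Library.Product_Lexorder"
begin

text \<open>Permutations of S_infinity are represented as functions nat => nat
  (bijections of the positive integers with finite support; 0 is fixed).
  Products are composition: (u w)(x) = u (w x).\<close>

definition simple_transp :: "nat \<Rightarrow> nat \<Rightarrow> nat" where
  "simple_transp a = (\<lambda>x. if x = a then a + 1 else if x = a + 1 then a else x)"

definition coxeter_length :: "(nat \<Rightarrow> nat) \<Rightarrow> nat" where
  "coxeter_length w = card {(x, y). 0 < x \<and> x < y \<and> w y < w x}"

definition demazure_step :: "(nat \<Rightarrow> nat) \<Rightarrow> nat \<Rightarrow> (nat \<Rightarrow> nat)" where
  "demazure_step u a =
     (if coxeter_length (u \<circ> simple_transp a) = coxeter_length u + 1
      then u \<circ> simple_transp a else u)"

definition reading_list :: "(nat \<times> nat) set \<Rightarrow> (nat \<times> nat) list" where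
  "reading_list D = sort_key (\<lambda>(r, c). (r, - int c)) (sorted_list_of_set D)"

definition reading_word :: "(nat \<times> nat) set \<Rightarrow> nat list" where
  "reading_word D = map (\<lambda>(r, c). r + c - 1) (reading_list D)"

definition demazure_prod :: "(nat \<times> nat) set \<Rightarrow> (nat \<Rightarrow> nat)" where
  "demazure_prod D = foldl demazure_step id (reading_word D)"

definition pd_start :: "(nat \<times> nat) set \<Rightarrow> nat \<Rightarrow> nat" where
  "pd_start D i = (LEAST c. 1 \<le> c \<and> (i, c) \<notin> D)"

definition pd_J :: "(nat \<times> nat) set \<Rightarrow> nat \<Rightarrow> nat set" where
  "pd_J D i = {c. 1 \<le> c \<and> c < pd_start D i \<and> (i + 1, c) \<notin> D}"

end

theory Submission
  imports Defs
begin

text \<open>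
  Write [m..a] for the descending word m (m-1) ... a. With s the start of row i and j the
  minimum of J_i(D), the reading word of D is P [i+s-2..i] Q [i+j-1..i+1] Y: Q comes from the
  cells of row i+1 right of column j, so its letters are at least i+j+1, and Y from the rows
  below, so its letters are at least i+2. Removing the cell (i,j) deletes the letter i+j-1 from
  the run [i+s-2..i]. Far commutation and the braid relation give [m-1..a][m..a] = [m..a][m..a+1]
  in the 0-Hecke monoid, hence [i+j-1..i] Q [i+j-1..i+1] Y = [i+j-2..i] Q [i+j-1..i+1] Y i.
  Finally, the Demazure step by s_a is the 0-Hecke step (right multiplication by s_a exactly
  when u(a) < u(a+1)), because s_a then adds precisely the inversion (a,a+1).
\<close>

section \<open>Demazure steps as 0-Hecke steps\<close>

definition hecke_step :: "(nat \<Rightarrow> nat) \<Rightarrow> nat \<Rightarrow> nat \<Rightarrow> nat" where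
  "hecke_step u a = (if u a < u (Suc a) then u \<circ> simple_transp a else u)"

lemma simple_transp_simple_transp [simp]: "simple_transp a (simple_transp a x) = x"
  by (simp add: simple_transp_def)

lemma inj_simple_transp: "inj (simple_transp a)"
  by (metis injI simple_transp_simple_transp)

lemma simple_transp_simps [simp]: "simple_transp a a = Suc a" "simple_transp a (Suc a) = a"
  by (simp_all add: simple_transp_def)

lemma simple_transp_pos: "0 < x \<Longrightarrow> 1 \<le> a \<Longrightarrow> 0 < simple_transp a x"
  by (simp add: simple_transp_def)

lemma simple_transp_strict_mono:
  "x < y \<Longrightarrow> (x, y) \<noteq> (a, Suc a) \<Longrightarrow> simple_transp a x < simple_transp a y"
  by (auto simp: simple_transp_def)

lemma simple_transp_commute:
  assumes "a + 2 \<le> b \<or> b + 2 \<le> a"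
  shows "simple_transp a \<circ> simple_transp b = simple_transp b \<circ> simple_transp a"
  using assms by (auto simp: simple_transp_def fun_eq_iff)

lemma simple_transp_braid:
  "simple_transp b \<circ> simple_transp (Suc b) \<circ> simple_transp b =
   simple_transp (Suc b) \<circ> simple_transp b \<circ> simple_transp (Suc b)"
  by (auto simp: simple_transp_def fun_eq_iff)

definition finitary_perm :: "(nat \<Rightarrow> nat) \<Rightarrow> bool" where
  "finitary_perm u \<longleftrightarrow> inj u \<and> (\<exists>N. \<forall>x\<ge>N. u x = x)"

lemma finitary_perm_id: "finitary_perm id"
  by (simp add: finitary_perm_def)

lemma finitary_perm_comp_simple_transp:
  assumes "finitary_perm u"
  shows "finitary_perm (u \<circ> simple_transp a)"
proof -
  obtain N where "inj u" and N: "\<forall>x\<ge>N. u x = x"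
    using assms by (auto simp: finitary_perm_def)
  then have "\<forall>x\<ge>max N (a + 2). (u \<circ> simple_transp a) x = x"
    by (auto simp: simple_transp_def)
  then show ?thesis
    using \<open>inj u\<close> inj_simple_transp unfolding finitary_perm_def by (blast intro: inj_compose)
qed

definition inversions :: "(nat \<Rightarrow> nat) \<Rightarrow> (nat \<times> nat) set" where
  "inversions u = {(x, y). 0 < x \<and> x < y \<and> u y < u x}"

lemma coxeter_length_eq_card_inversions: "coxeter_length u = card (inversions u)"
  by (simp add: coxeter_length_def inversions_def)

lemma finite_inversions:
  assumes "finitary_perm u"
  shows "finite (inversions u)"
proof -
  obtain N where "inj u" and N: "\<forall>x\<ge>N. u x = x"
    using assms by (auto simp: finitary_perm_def)
  have below: "u x < N" if "x < N" for x
    using N \<open>inj u\<close> that by (metis injD not_le)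
  have "y < N" if "(x, y) \<in> inversions u" for x y
  proof (rule ccontr)
    assume "\<not> y < N"
    then have "u y = y" "N \<le> y"
      using N by auto
    moreover have "x < y" "u y < u x"
      using that by (auto simp: inversions_def)
    ultimately show False
      using N below by (metis leD le_trans less_imp_le_nat not_le)
  qed
  then have "inversions u \<subseteq> {..<N} \<times> {..<N}"
    by (force simp: inversions_def)
  then show ?thesis
    using finite_subset by blast
qed

lemma inversions_comp_simple_transp_ascent:
  assumes "1 \<le> a" and "u a < u (Suc a)"
  shows "inversions (u \<circ> simple_transp a) =
    insert (a, Suc a) (map_prod (simple_transp a) (simple_transp a) ` inversions u)"
  (is "?lhs = insert ?p (?g ` _)")
proof (intro equalityI subsetI)
  fix q assume "q \<in> ?lhs"
  then obtain x y where q: "q = (x, y)" "0 < x" "x < y" "u (simple_transp a y) < u (simple_transp a x)"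
    by (auto simp: inversions_def)
  show "q \<in> insert ?p (?g ` inversions u)"
  proof (cases "q = ?p")
    case False
    then have "(simple_transp a x, simple_transp a y) \<in> inversions u"
      using q assms(1) by (simp add: inversions_def simple_transp_pos simple_transp_strict_mono)
    then show ?thesis
      using q by (auto intro!: image_eqI[where x = "(simple_transp a x, simple_transp a y)"])
  qed simp
next
  fix q assume "q \<in> insert ?p (?g ` inversions u)"
  then show "q \<in> ?lhs"
  proof
    assume "q \<in> ?g ` inversions u"
    then obtain x y where "q = ?g (x, y)" "0 < x" "x < y" "u y < u x"
      by (auto simp: inversions_def)
    moreover have "(x, y) \<noteq> ?p"
      using \<open>u y < u x\<close> assms(2) by auto
    ultimately show "q \<in> ?lhs"
      using assms(1) by (simp add: inversions_def simple_transp_pos simple_transp_strict_mono)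
  qed (use assms in \<open>simp add: inversions_def\<close>)
qed

lemma coxeter_length_comp_simple_transp_ascent:
  assumes "finitary_perm u" and "1 \<le> a" and "u a < u (Suc a)"
  shows "coxeter_length (u \<circ> simple_transp a) = Suc (coxeter_length u)"
proof -
  let ?g = "map_prod (simple_transp a) (simple_transp a)"
  have "inj ?g"
    using map_prod_inj_on[OF inj_simple_transp inj_simple_transp] by simp
  moreover have "(a, Suc a) \<notin> ?g ` inversions u"
  proof
    assume "(a, Suc a) \<in> ?g ` inversions u"
    then obtain x y where "(x, y) \<in> inversions u" "simple_transp a x = a" "simple_transp a y = Suc a"
      by auto
    moreover from this(2,3) have "x = Suc a" "y = a"
      by (metis simple_transp_simple_transp simple_transp_simps)+
    ultimately show False
      by (simp add: inversions_def)
  qed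
  ultimately show ?thesis
    using finite_inversions[OF assms(1)]
    by (simp add: coxeter_length_eq_card_inversions inversions_comp_simple_transp_ascent[OF assms(2,3)]
        card_image inj_on_subset)
qed

lemma demazure_step_eq_hecke_step:
  assumes "finitary_perm u" and "1 \<le> a"
  shows "demazure_step u a = hecke_step u a"
proof (cases "u a < u (Suc a)")
  case True
  then show ?thesis
    using coxeter_length_comp_simple_transp_ascent[OF assms]
    by (simp add: demazure_step_def hecke_step_def)
next
  case False
  let ?v = "u \<circ> simple_transp a"
  have "u a \<noteq> u (Suc a)"
    using assms(1) by (auto simp: finitary_perm_def dest: injD)
  with False have "?v a < ?v (Suc a)"
    by simp
  moreover have "?v \<circ> simple_transp a = u"
    by (simp add: fun_eq_iff)
  ultimately have "coxeter_length u = Suc (coxeter_length ?v)"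
    using coxeter_length_comp_simple_transp_ascent[of ?v a] assms
    by (simp add: finitary_perm_comp_simple_transp)
  then show ?thesis
    using False by (simp add: demazure_step_def hecke_step_def)
qed

lemma finitary_perm_hecke_step: "finitary_perm u \<Longrightarrow> finitary_perm (hecke_step u a)"
  by (simp add: hecke_step_def finitary_perm_comp_simple_transp)

lemma foldl_demazure_step_eq_foldl_hecke_step:
  "finitary_perm u \<Longrightarrow> \<forall>a\<in>set w. 1 \<le> a \<Longrightarrow> foldl demazure_step u w = foldl hecke_step u w"
  by (induction w arbitrary: u) (simp_all add: demazure_step_eq_hecke_step finitary_perm_hecke_step)

section \<open>Equivalence of words in the 0-Hecke monoid\<close>

definition hecke_equiv :: "nat list \<Rightarrow> nat list \<Rightarrow> bool" (infix "\<approx>\<^sub>H" 50) where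
  "xs \<approx>\<^sub>H ys \<longleftrightarrow> (\<forall>u. foldl hecke_step u xs = foldl hecke_step u ys)"

lemma hecke_equiv_refl [simp]: "xs \<approx>\<^sub>H xs"
  by (simp add: hecke_equiv_def)

lemma hecke_equiv_sym: "xs \<approx>\<^sub>H ys \<Longrightarrow> ys \<approx>\<^sub>H xs"
  by (simp add: hecke_equiv_def)

lemma hecke_equiv_trans [trans]: "xs \<approx>\<^sub>H ys \<Longrightarrow> ys \<approx>\<^sub>H zs \<Longrightarrow> xs \<approx>\<^sub>H zs"
  by (simp add: hecke_equiv_def)

lemma hecke_equiv_append: "xs \<approx>\<^sub>H xs' \<Longrightarrow> ys \<approx>\<^sub>H ys' \<Longrightarrow> xs @ ys \<approx>\<^sub>H xs' @ ys'"
  by (simp add: hecke_equiv_def)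

lemma hecke_equiv_cong: "xs \<approx>\<^sub>H ys \<Longrightarrow> ps @ xs @ qs \<approx>\<^sub>H ps @ ys @ qs"
  by (simp add: hecke_equiv_append)

lemma hecke_step_commute:
  assumes "a + 2 \<le> b \<or> b + 2 \<le> a"
  shows "hecke_step (hecke_step u a) b = hecke_step (hecke_step u b) a"
proof -
  have "simple_transp a b = b" "simple_transp a (Suc b) = Suc b"
    "simple_transp b a = a" "simple_transp b (Suc a) = Suc a"
    using assms by (auto simp: simple_transp_def)
  moreover have "u \<circ> simple_transp a \<circ> simple_transp b = u \<circ> simple_transp b \<circ> simple_transp a"
    using simple_transp_commute[OF assms] by (simp add: comp_assoc)
  ultimately show ?thesis
    by (simp add: hecke_step_def)
qed

lemma foldl_hecke_step_commute:
  assumes "\<forall>x\<in>set xs. \<forall>y\<in>set ys. x + 2 \<le> y \<or> y + 2 \<le> x"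
  shows "foldl hecke_step u (xs @ ys) = foldl hecke_step u (ys @ xs)"
proof -
  have letter: "foldl hecke_step (hecke_step u x) ys = hecke_step (foldl hecke_step u ys) x"
    if "\<forall>y\<in>set ys. x + 2 \<le> y \<or> y + 2 \<le> x" for u x ys
    using that by (induction ys arbitrary: u) (simp_all add: hecke_step_commute)
  from assms show ?thesis
    by (induction xs arbitrary: u) (simp_all add: letter)
qed

lemma hecke_equiv_commute:
  "\<forall>x\<in>set xs. \<forall>y\<in>set ys. x + 2 \<le> y \<or> y + 2 \<le> x \<Longrightarrow> xs @ ys \<approx>\<^sub>H ys @ xs"
  unfolding hecke_equiv_def by (metis foldl_hecke_step_commute)

lemma hecke_step_braid:
  "hecke_step (hecke_step (hecke_step u b) (Suc b)) b =
    hecke_step (hecke_step (hecke_step u (Suc b)) b) (Suc b)"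
proof -
  have "simple_transp b (Suc (Suc b)) = Suc (Suc b)" "simple_transp (Suc b) b = b"
    by (simp_all add: simple_transp_def)
  then show ?thesis
    by (cases "u b < u (Suc b)"; cases "u (Suc b) < u (Suc (Suc b))"; cases "u b < u (Suc (Suc b))")
      (simp_all add: hecke_step_def comp_assoc simple_transp_braid[unfolded comp_assoc])
qed

lemma hecke_equiv_braid: "[b, Suc b, b] \<approx>\<^sub>H [Suc b, b, Suc b]"
  by (simp add: hecke_equiv_def hecke_step_braid)

lemma hecke_equiv_descending_runs:
  "a \<le> m \<Longrightarrow> rev [a..<m] @ rev [a..<Suc m] \<approx>\<^sub>H rev [a..<Suc m] @ rev [Suc a..<Suc m]"
proof (induction m)
  case (Suc m)
  show ?case
  proof (cases "a = Suc m")
    case False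
    with Suc.prems have "a \<le> m"
      by simp
    define L where "L = rev [a..<m]"
    define T where "T = rev [Suc a..<Suc m]"
    have runs: "rev [a..<Suc m] = m # L" "rev [a..<Suc (Suc m)] = Suc m # m # L"
      "rev [Suc a..<Suc (Suc m)] = Suc m # T"
      using \<open>a \<le> m\<close> by (simp_all add: L_def T_def)
    have IH: "L @ m # L \<approx>\<^sub>H (m # L) @ T"
      using Suc.IH[OF \<open>a \<le> m\<close>] unfolding runs(1) L_def[symmetric] T_def[symmetric] .
    have far: "L @ [Suc m] \<approx>\<^sub>H [Suc m] @ L"
      by (rule hecke_equiv_commute) (auto simp: L_def)
    have "(m # L) @ (Suc m # m # L) = [m] @ (L @ [Suc m]) @ m # L"
      by simp
    also have "\<dots> \<approx>\<^sub>H [m] @ ([Suc m] @ L) @ m # L"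
      by (rule hecke_equiv_cong[OF far])
    also have "\<dots> = [m, Suc m] @ (L @ m # L) @ []"
      by simp
    also have "\<dots> \<approx>\<^sub>H [m, Suc m] @ ((m # L) @ T) @ []"
      by (rule hecke_equiv_cong[OF IH])
    also have "\<dots> = [] @ [m, Suc m, m] @ (L @ T)"
      by simp
    also have "\<dots> \<approx>\<^sub>H [] @ [Suc m, m, Suc m] @ (L @ T)"
      by (rule hecke_equiv_cong[OF hecke_equiv_braid])
    also have "\<dots> = [Suc m, m] @ ([Suc m] @ L) @ T"
      by simp
    also have "\<dots> \<approx>\<^sub>H [Suc m, m] @ (L @ [Suc m]) @ T"
      by (rule hecke_equiv_cong[OF hecke_equiv_sym[OF far]])
    also have "\<dots> = (Suc m # m # L) @ (Suc m # T)"
      by simp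
    finally show ?thesis
      unfolding runs .
  qed simp
qed simp

lemma hecke_equiv_move_letter:
  assumes "a \<le> m" and "\<forall>q\<in>set qs. m + 2 \<le> q" and "\<forall>y\<in>set ys. a + 2 \<le> y"
  shows "rev [a..<Suc m] @ qs @ rev [Suc a..<Suc m] @ ys \<approx>\<^sub>H
    rev [a..<m] @ qs @ rev [Suc a..<Suc m] @ ys @ [a]"
proof -
  define L where "L = rev [a..<m]"
  define T where "T = rev [Suc a..<Suc m]"
  have run: "rev [a..<Suc m] = m # L"
    using assms(1) by (simp add: L_def)
  have "T @ [a] = rev [a..<Suc m]"
    using assms(1) by (simp add: T_def upt_conv_Cons)
  with run have T_snoc: "T @ [a] = m # L"
    by simp
  have runs: "L @ m # L \<approx>\<^sub>H (m # L) @ T"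
    using hecke_equiv_descending_runs[OF assms(1)] unfolding run L_def[symmetric] T_def[symmetric] .
  have "(m # L) @ qs @ T @ ys = [] @ ((m # L) @ qs) @ T @ ys"
    by simp
  also have "\<dots> \<approx>\<^sub>H [] @ (qs @ m # L) @ T @ ys"
    by (rule hecke_equiv_cong, rule hecke_equiv_commute) (use assms(2) in \<open>auto simp: L_def\<close>)
  also have "\<dots> = qs @ ((m # L) @ T) @ ys"
    by simp
  also have "\<dots> \<approx>\<^sub>H qs @ (L @ m # L) @ ys"
    by (rule hecke_equiv_cong[OF hecke_equiv_sym[OF runs]])
  also have "\<dots> = [] @ (qs @ L) @ (m # L) @ ys"
    by simp
  also have "\<dots> \<approx>\<^sub>H [] @ (L @ qs) @ (m # L) @ ys"
    by (rule hecke_equiv_cong, rule hecke_equiv_commute) (use assms(2) in \<open>auto simp: L_def\<close>)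
  also have "\<dots> = (L @ qs @ T) @ ([a] @ ys) @ []"
    by (simp flip: T_snoc)
  also have "\<dots> \<approx>\<^sub>H (L @ qs @ T) @ (ys @ [a]) @ []"
    by (rule hecke_equiv_cong, rule hecke_equiv_commute) (use assms(3) in auto)
  finally show ?thesis
    unfolding run L_def[symmetric] T_def[symmetric] by simp
qed

section \<open>Reading words\<close>

definition reading_key :: "nat \<times> nat \<Rightarrow> nat \<times> int" where
  "reading_key = (\<lambda>(r, c). (r, - int c))"

lemma inj_reading_key: "inj reading_key"
  by (auto simp: inj_def reading_key_def)

lemma sorted_wrt_reading_list:
  assumes "finite D"
  shows "sorted_wrt (\<lambda>p q. reading_key p < reading_key q) (reading_list D)"
proof -
  have "reading_list D = sort_key reading_key (sorted_list_of_set D)"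
    by (simp add: reading_list_def reading_key_def)
  then have "sorted_wrt (<) (map reading_key (reading_list D))"
    using assms inj_reading_key by (simp add: strict_sorted_iff distinct_map inj_on_subset[of _ UNIV])
  then show ?thesis
    by (simp add: sorted_wrt_map)
qed

lemma set_reading_list: "finite D \<Longrightarrow> set (reading_list D) = D"
  by (simp add: reading_list_def)

lemma reading_list_eqI:
  assumes "finite D" and "set xs = D" and "sorted_wrt (\<lambda>p q. reading_key p < reading_key q) xs"
  shows "reading_list D = xs"
proof -
  have "map reading_key (reading_list D) = map reading_key xs"
    using assms sorted_wrt_reading_list[OF assms(1)]
    by (intro strict_sorted_equal) (simp_all add: sorted_wrt_map set_reading_list)
  then show ?thesis
    using inj_reading_key by (simp add: inj_map_eq_map)
qed

lemma reading_word_Un: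
  assumes "finite A" and "finite B" and "\<forall>p\<in>A. \<forall>q\<in>B. reading_key p < reading_key q"
  shows "reading_word (A \<union> B) = reading_word A @ reading_word B"
proof -
  have "reading_list (A \<union> B) = reading_list A @ reading_list B"
    using assms sorted_wrt_reading_list[of A] sorted_wrt_reading_list[of B]
    by (intro reading_list_eqI) (simp_all add: sorted_wrt_append set_reading_list)
  then show ?thesis
    by (simp add: reading_word_def)
qed

lemma reading_word_empty [simp]: "reading_word {} = []"
  by (simp add: reading_word_def reading_list_def)

lemma reading_word_Union_blocks:
  assumes "\<forall>A\<in>set As. finite A"
    and "sorted_wrt (\<lambda>A B. \<forall>p\<in>A. \<forall>q\<in>B. reading_key p < reading_key q) As"
  shows "reading_word (\<Union>(set As)) = concat (map reading_word As)"
  using assms by (induction As) (simp_all add: reading_word_Un)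

lemma reading_word_row_segment:
  assumes "1 \<le> p"
  shows "reading_word ({r} \<times> {p..<q}) = rev [r + p - 1..<r + q - 1]"
proof -
  have "reading_list ({r} \<times> {p..<q}) = map (Pair r) (rev [p..<q])"
    by (rule reading_list_eqI) (auto simp: sorted_wrt_map sorted_wrt_rev reading_key_def
        intro: sorted_wrt_mono_rel[OF _ sorted_wrt_upt])
  moreover have "map (\<lambda>c. r + c - 1) [p..<q] = [r + p - 1..<r + q - 1]"
    using assms by (simp add: list_eq_iff_nth_eq add.assoc)
  ultimately show ?thesis
    by (simp add: reading_word_def comp_def flip: rev_map)
qed

lemma set_reading_word: "finite D \<Longrightarrow> set (reading_word D) = (\<lambda>(r, c). r + c - 1) ` D"
  by (simp add: reading_word_def set_reading_list)

lemma reading_key_less_iff: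
  "reading_key p < reading_key q \<longleftrightarrow> fst p < fst q \<or> fst p = fst q \<and> snd q < snd p"
  by (auto simp: reading_key_def split: prod.splits)

section \<open>Pipe dreams\<close>

lemma pd_start_notin:
  assumes "finite D"
  shows "1 \<le> pd_start D i" and "(i, pd_start D i) \<notin> D"
proof -
  obtain c where "c \<notin> insert 0 (snd ` D)"
    using ex_new_if_finite[of "insert 0 (snd ` D)"] assms by auto
  then have "1 \<le> c \<and> (i, c) \<notin> D"
    by force
  then have "1 \<le> pd_start D i \<and> (i, pd_start D i) \<notin> D"
    unfolding pd_start_def by (rule LeastI)
  then show "1 \<le> pd_start D i" and "(i, pd_start D i) \<notin> D"
    by simp_all
qed

lemma less_pd_start: "1 \<le> c \<Longrightarrow> c < pd_start D i \<Longrightarrow> (i, c) \<in> D"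
  unfolding pd_start_def using not_less_Least by blast

lemma finite_pd_J: "finite (pd_J D i)"
  by (rule finite_subset[of _ "{..<pd_start D i}"]) (auto simp: pd_J_def)

lemma Min_pd_J:
  assumes "pd_J D i \<noteq> {}"
  shows "1 \<le> Min (pd_J D i)" and "Min (pd_J D i) < pd_start D i"
    and "(Suc i, Min (pd_J D i)) \<notin> D"
  using Min_in[OF finite_pd_J assms] by (simp_all add: pd_J_def)

lemma less_Min_pd_J:
  assumes "pd_J D i \<noteq> {}" and "1 \<le> c" and "c < Min (pd_J D i)"
  shows "(Suc i, c) \<in> D"
proof (rule ccontr)
  assume "(Suc i, c) \<notin> D"
  moreover have "c < pd_start D i"
    using assms(3) Min_pd_J(2)[OF assms(1)] by linarith
  ultimately have "c \<in> pd_J D i"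
    using assms(2) by (simp add: pd_J_def)
  then show False
    using Min_le[OF finite_pd_J] assms(3) by fastforce
qed

lemma reading_word_remove_decomposition:
  assumes "finite D" and pos: "\<forall>(r, c)\<in>D. 1 \<le> r \<and> 1 \<le> c"
    and "1 \<le> j" and "j < s"
    and "{i} \<times> {1..<s} \<subseteq> D" and "(i, s) \<notin> D"
    and "{Suc i} \<times> {1..<j} \<subseteq> D" and "(Suc i, j) \<notin> D"
  obtains wP wQ wY
  where "reading_word D = wP @ rev [i..<i + s - 1] @ wQ @ rev [Suc i..<i + j] @ wY"
    and "reading_word (D - {(i, j)}) =
      wP @ rev [i + j..<i + s - 1] @ rev [i..<i + j - 1] @ wQ @ rev [Suc i..<i + j] @ wY"
    and "\<forall>q\<in>set wQ. i + j + 1 \<le> q" and "\<forall>y\<in>set wY. i + 2 \<le> y"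
proof -
  define P where "P = {p \<in> D. fst p < i \<or> (fst p = i \<and> s < snd p)}"
  define Q where "Q = {p \<in> D. fst p = Suc i \<and> j < snd p}"
  define Y where "Y = {p \<in> D. Suc (Suc i) \<le> fst p}"
  have rows: "p \<in> P \<or> p \<in> {i} \<times> {1..<s} \<or> p \<in> Q \<or> p \<in> {Suc i} \<times> {1..<j} \<or> p \<in> Y"
    if "p \<in> D" for p
  proof -
    obtain r c where p: "p = (r, c)"
      by fastforce
    with pos that have "1 \<le> c"
      by auto
    consider "r < i" | "r = i" | "r = Suc i" | "Suc (Suc i) \<le> r"
      by linarith
    then show ?thesis
      using that p \<open>1 \<le> c\<close> assms(6,8) by cases (auto simp: P_def Q_def Y_def, (metis nat_neq_iff)+)
  qed
  have D_eq: "D = \<Union>(set [P, {i} \<times> {1..<s}, Q, {Suc i} \<times> {1..<j}, Y])"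
    using rows assms(5,7) by (auto simp: P_def Q_def Y_def)
  moreover have "(i, j) \<notin> P \<union> Q \<union> Y"
    using assms(4) by (auto simp: P_def Q_def Y_def)
  ultimately have D'_eq: "D - {(i, j)} =
      \<Union>(set [P, {i} \<times> {Suc j..<s}, {i} \<times> {1..<j}, Q, {Suc i} \<times> {1..<j}, Y])"
    using assms(4) by auto
  have "reading_word D = concat (map reading_word [P, {i} \<times> {1..<s}, Q, {Suc i} \<times> {1..<j}, Y])"
    unfolding D_eq using assms(1,4)
    by (intro reading_word_Union_blocks) (auto simp: P_def Q_def Y_def reading_key_less_iff)
  moreover have "reading_word (D - {(i, j)}) =
      concat (map reading_word [P, {i} \<times> {Suc j..<s}, {i} \<times> {1..<j}, Q, {Suc i} \<times> {1..<j}, Y])"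
    unfolding D'_eq using assms(1,4)
    by (intro reading_word_Union_blocks) (auto simp: P_def Q_def Y_def reading_key_less_iff)
  moreover have "\<forall>q\<in>set (reading_word Q). i + j + 1 \<le> q"
    using assms(1) by (auto simp: set_reading_word Q_def)
  moreover have "\<forall>y\<in>set (reading_word Y). i + 2 \<le> y"
    using assms(1) pos by (fastforce simp: set_reading_word Y_def)
  ultimately show thesis
    by (intro that[of "reading_word P" "reading_word Q" "reading_word Y"])
      (simp_all add: reading_word_row_segment)
qed

lemma reading_word_remove_hecke_equiv:
  assumes "finite D" and "\<forall>(r, c)\<in>D. 1 \<le> r \<and> 1 \<le> c"
    and "1 \<le> j" and "j < s"
    and "{i} \<times> {1..<s} \<subseteq> D" and "(i, s) \<notin> D"
    and "{Suc i} \<times> {1..<j} \<subseteq> D" and "(Suc i, j) \<notin> D"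
  shows "reading_word D \<approx>\<^sub>H reading_word (D - {(i, j)}) @ [i]"
proof -
  obtain wP wQ wY
    where words: "reading_word D = wP @ rev [i..<i + s - 1] @ wQ @ rev [Suc i..<i + j] @ wY"
      "reading_word (D - {(i, j)}) =
        wP @ rev [i + j..<i + s - 1] @ rev [i..<i + j - 1] @ wQ @ rev [Suc i..<i + j] @ wY"
    and bounds: "\<forall>q\<in>set wQ. i + j + 1 \<le> q" "\<forall>y\<in>set wY. i + 2 \<le> y"
    using reading_word_remove_decomposition[OF assms] .
  have "rev [i..<Suc (i + j - 1)] @ wQ @ rev [Suc i..<Suc (i + j - 1)] @ wY
      \<approx>\<^sub>H rev [i..<i + j - 1] @ wQ @ rev [Suc i..<Suc (i + j - 1)] @ wY @ [i]"
    using assms(3) bounds by (intro hecke_equiv_move_letter) simp_all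
  moreover have "[i..<i + s - 1] = [i..<i + j] @ [i + j..<i + s - 1]"
    using upt_add_eq_append[of i "i + j" "s - 1 - j"] assms(4) by simp
  ultimately show ?thesis
    unfolding words using hecke_equiv_append[OF hecke_equiv_refl] assms(3) by simp
qed

lemma finitary_perm_foldl_hecke_step: "finitary_perm u \<Longrightarrow> finitary_perm (foldl hecke_step u w)"
  by (induction w arbitrary: u) (simp_all add: finitary_perm_hecke_step)

lemma demazure_prod_eq_foldl_hecke_step:
  assumes "finite D" and "\<forall>(r, c)\<in>D. 1 \<le> r \<and> 1 \<le> c"
  shows "demazure_prod D = foldl hecke_step id (reading_word D)"
  unfolding demazure_prod_def using assms
  by (intro foldl_demazure_step_eq_foldl_hecke_step finitary_perm_id) (fastforce simp: set_reading_word)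

theorem mainTheorem3:
  fixes D :: "(nat \<times> nat) set" and i :: nat
  assumes "finite D"
    and "\<forall>(r, c) \<in> D. 1 \<le> r \<and> 1 \<le> c"
    and "1 \<le> i"
    and "pd_J D i \<noteq> {}"
  shows "demazure_prod D =
         demazure_step (demazure_prod (D - {(i, Min (pd_J D i))})) i"
proof -
  let ?D' = "D - {(i, Min (pd_J D i))}"
  have equiv: "reading_word D \<approx>\<^sub>H reading_word ?D' @ [i]"
    using assms(1,2) Min_pd_J[OF assms(4)] pd_start_notin[OF assms(1)]
      less_pd_start less_Min_pd_J[OF assms(4)]
    by (intro reading_word_remove_hecke_equiv) auto
  have prods: "demazure_prod D = foldl hecke_step id (reading_word D)"
    "demazure_prod ?D' = foldl hecke_step id (reading_word ?D')"
    using assms(1,2) by (simp_all add: demazure_prod_eq_foldl_hecke_step)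
  have "finitary_perm (demazure_prod ?D')"
    unfolding prods(2) by (rule finitary_perm_foldl_hecke_step[OF finitary_perm_id])
  then have "demazure_step (demazure_prod ?D') i = hecke_step (demazure_prod ?D') i"
    using assms(3) by (rule demazure_step_eq_hecke_step)
  also have "\<dots> = demazure_prod D"
    using equiv by (simp add: prods hecke_equiv_def)
  finally show ?thesis
    by (rule sym)
qed

end
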